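(* Equip the set $\mathcal{SP}$ of shape measures with the topology induced by the Wasserstein distance $W$. Then the map $F_{\mathrm{B}}:\mathrm{B}\to\mathcal{SP}$, $[c]\mapsto F(c)$, is continuous.
   Context: $\mathrm{Emb}$ is the set of $C^\infty$-embeddings $S^1\to\mathbb{R}^2$, an open subset of $C^\infty(S^1,\mathbb{R}^2)$ with the topology of uniform convergence in all derivatives; $\mathrm{Diff}$ is the group of $C^\infty$-diffeomorphisms of $S^1$; $\mathrm{B}=\mathrm{Emb}/\mathrm{Diff}$ (classes $[c]=\{c\circ\varphi\}$) is the quotient manifold, with the quotient topology. $\Omega(c)$ is the open region enclosed by $c$, $F(c)(A)=|\Omega(c)|^{-1}|A\cap\Omega(c)|$. A shape measure is $\mu(A)=|\Omega|^{-1}|A\cap\Omega|$ for $\Omega$ open with $0<|\Omega|<\infty$ and connected $C^\infty$ boundary. $W(\mu_1,\mu_2)=(\inf_\gamma\int\|x-y\|^2d\gamma)^{1/2}$, infimum over couplings $\gamma$ of $\mu_1$ and $\mu_2$. *)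

theory Defs
  imports "HOL-Probability.Probability"
begin

fun Dk :: "nat \<Rightarrow> (real \<Rightarrow> real^2) \<Rightarrow> real \<Rightarrow> real^2" where
  "Dk 0 g = g"
| "Dk (Suc k) g = (\<lambda>t. vector_derivative (Dk k g) (at t))"

definition smooth_on :: "real set \<Rightarrow> (real \<Rightarrow> real^2) \<Rightarrow> bool" where
  "smooth_on S g \<longleftrightarrow> (\<forall>k. \<forall>t\<in>S. Dk k g differentiable (at t))"

definition S1 :: "(real^2) set" where
  "S1 = sphere 0 1"

text \<open>Standard covering map R -> S1; a map on S1 is smooth iff its composition with it is.\<close>
definition ecirc :: "real \<Rightarrow> real^2" where
  "ecirc t = vector [cos (2 * pi * t), sin (2 * pi * t)]"

text \<open>C-infinity maps S1 -> R2 (represented extensionally on S1).\<close>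
definition Cinf :: "(real^2 \<Rightarrow> real^2) set" where
  "Cinf = {c. c \<in> extensional S1 \<and> smooth_on UNIV (c \<circ> ecirc)}"

text \<open>Embeddings: injective immersions of the compact manifold S1.\<close>
definition Emb :: "(real^2 \<Rightarrow> real^2) set" where
  "Emb = {c \<in> Cinf. inj_on c S1 \<and> (\<forall>t. vector_derivative (c \<circ> ecirc) (at t) \<noteq> 0)}"

text \<open>Diffeomorphisms of S1 (smooth bijections S1 -> S1 with smooth inverse; smoothness
  as maps into R2, S1 being an embedded submanifold).\<close>
definition Diff :: "(real^2 \<Rightarrow> real^2) set" where
  "Diff = {\<phi>. bij_betw \<phi> S1 S1 \<and> smooth_on UNIV (\<phi> \<circ> ecirc)
              \<and> smooth_on UNIV (inv_into S1 \<phi> \<circ> ecirc)}"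

text \<open>Topology of uniform convergence in all derivatives on C-infinity(S1,R2):
  generated by the seminorm balls.\<close>
definition Cinf_top :: "(real^2 \<Rightarrow> real^2) topology" where
  "Cinf_top = topology_generated_by
     {{c \<in> Cinf. (SUP t. norm (Dk k (c \<circ> ecirc) t - Dk k (c0 \<circ> ecirc) t)) < r}
       | k c0 r. c0 \<in> Cinf \<and> r > 0}"

definition Emb_top :: "(real^2 \<Rightarrow> real^2) topology" where
  "Emb_top = subtopology Cinf_top Emb"

definition cls :: "(real^2 \<Rightarrow> real^2) \<Rightarrow> (real^2 \<Rightarrow> real^2) set" where
  "cls c = {restrict (c \<circ> \<phi>) S1 | \<phi>. \<phi> \<in> Diff}"

definition Bset :: "(real^2 \<Rightarrow> real^2) set set" where
  "Bset = cls ` Emb"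

definition B_top :: "(real^2 \<Rightarrow> real^2) set topology" where
  "B_top = topology (\<lambda>U. U \<subseteq> Bset \<and> openin Emb_top {c \<in> Emb. cls c \<in> U})"

definition Omega :: "(real^2 \<Rightarrow> real^2) \<Rightarrow> (real^2) set" where
  "Omega c = \<Union>{C \<in> components (- (c ` S1)). bounded C}"

definition F :: "(real^2 \<Rightarrow> real^2) \<Rightarrow> (real^2) measure" where
  "F c = uniform_measure lborel (Omega c)"

definition FB :: "(real^2 \<Rightarrow> real^2) set \<Rightarrow> (real^2) measure" where
  "FB X = F (SOME c. c \<in> X)"

text \<open>Embedded 1-dimensional C-infinity submanifold of R2 (local regular parametrisations
  that are homeomorphisms onto open pieces).\<close>
definition smooth_curve_set :: "(real^2) set \<Rightarrow> bool" where
  "smooth_curve_set M \<longleftrightarrow> (\<forall>p\<in>M. \<exists>U a b \<gamma>. open U \<and> p \<in> U \<and> a < b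
      \<and> smooth_on {a<..<b} \<gamma> \<and> (\<forall>t\<in>{a<..<b}. vector_derivative \<gamma> (at t) \<noteq> 0)
      \<and> (\<exists>g. homeomorphism {a<..<b} (M \<inter> U) \<gamma> g))"

definition SP :: "(real^2) measure set" where
  "SP = {uniform_measure lborel \<Omega> | \<Omega>. open \<Omega> \<and> 0 < emeasure lborel \<Omega>
          \<and> emeasure lborel \<Omega> < \<infinity> \<and> connected (frontier \<Omega>) \<and> smooth_curve_set (frontier \<Omega>)}"

definition couplings :: "(real^2) measure \<Rightarrow> (real^2) measure \<Rightarrow> ((real^2) \<times> (real^2)) measure set" where
  "couplings \<mu> \<nu> = {\<gamma>. sets \<gamma> = sets (borel \<Otimes>\<^sub>M borel) \<and> prob_space \<gamma>
       \<and> distr \<gamma> borel fst = \<mu> \<and> distr \<gamma> borel snd = \<nu>}"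

definition W2sq :: "(real^2) measure \<Rightarrow> (real^2) measure \<Rightarrow> ennreal" where
  "W2sq \<mu> \<nu> = (INF \<gamma>\<in>couplings \<mu> \<nu>. \<integral>\<^sup>+ z. ennreal ((norm (fst z - snd z))\<^sup>2) \<partial>\<gamma>)"

definition W :: "(real^2) measure \<Rightarrow> (real^2) measure \<Rightarrow> ennreal" where
  "W \<mu> \<nu> = (if W2sq \<mu> \<nu> = \<infinity> then \<infinity> else ennreal (sqrt (enn2real (W2sq \<mu> \<nu>))))"

definition SP_top :: "(real^2) measure topology" where
  "SP_top = topology (\<lambda>U. U \<subseteq> SP \<and>
      (\<forall>\<mu>\<in>U. \<exists>\<epsilon>>0. {\<nu> \<in> SP. W \<mu> \<nu> < ennreal \<epsilon>} \<subseteq> U))"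

lemma istopology_B: "istopology (\<lambda>U. U \<subseteq> Bset \<and> openin Emb_top {c \<in> Emb. cls c \<in> U})"
proof -
  have 1: "{c \<in> Emb. cls c \<in> S \<inter> T} = {c \<in> Emb. cls c \<in> S} \<inter> {c \<in> Emb. cls c \<in> T}" for S T
    by auto
  have 2: "{c \<in> Emb. cls c \<in> \<Union>K} = \<Union>((\<lambda>U. {c \<in> Emb. cls c \<in> U}) ` K)" for K
    by auto
  have I: "S \<inter> T \<subseteq> Bset \<and> openin Emb_top {c \<in> Emb. cls c \<in> S \<inter> T}"
    if "S \<subseteq> Bset \<and> openin Emb_top {c \<in> Emb. cls c \<in> S}"
      "T \<subseteq> Bset \<and> openin Emb_top {c \<in> Emb. cls c \<in> T}" for S T
    using that unfolding 1 by (simp add: le_infI1 openin_Int)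
  have U: "\<Union>K \<subseteq> Bset \<and> openin Emb_top {c \<in> Emb. cls c \<in> \<Union>K}"
    if a: "\<forall>S\<in>K. S \<subseteq> Bset \<and> openin Emb_top {c \<in> Emb. cls c \<in> S}" for K
  proof -
    have "\<Union>K \<subseteq> Bset" using a by blast
    moreover have "openin Emb_top (\<Union>((\<lambda>U. {c \<in> Emb. cls c \<in> U}) ` K))"
      using a by (intro openin_Union) blast
    ultimately show ?thesis unfolding 2 by blast
  qed
  show ?thesis unfolding istopology_def using I U by blast
qed

lemma istopology_SP: "istopology (\<lambda>U. U \<subseteq> SP \<and>
      (\<forall>\<mu>\<in>U. \<exists>\<epsilon>>0. {\<nu> \<in> SP. W \<mu> \<nu> < ennreal \<epsilon>} \<subseteq> U))"
proof -
  have I: "S \<inter> T \<subseteq> SP \<and> (\<forall>\<mu>\<in>S \<inter> T. \<exists>\<epsilon>>0. {\<nu> \<in> SP. W \<mu> \<nu> < ennreal \<epsilon>} \<subseteq> S \<inter> T)"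
    if S: "S \<subseteq> SP \<and> (\<forall>\<mu>\<in>S. \<exists>\<epsilon>>0. {\<nu> \<in> SP. W \<mu> \<nu> < ennreal \<epsilon>} \<subseteq> S)"
    and T: "T \<subseteq> SP \<and> (\<forall>\<mu>\<in>T. \<exists>\<epsilon>>0. {\<nu> \<in> SP. W \<mu> \<nu> < ennreal \<epsilon>} \<subseteq> T)" for S T
  proof (intro conjI ballI)
    show "S \<inter> T \<subseteq> SP" using S by auto
    fix \<mu> assume "\<mu> \<in> S \<inter> T"
    then obtain e1 e2 where e: "e1 > 0" "{\<nu> \<in> SP. W \<mu> \<nu> < ennreal e1} \<subseteq> S"
      "e2 > 0" "{\<nu> \<in> SP. W \<mu> \<nu> < ennreal e2} \<subseteq> T" using S T by blast
    have m: "ennreal (min e1 e2) \<le> ennreal e1" "ennreal (min e1 e2) \<le> ennreal e2"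
      by (simp_all add: ennreal_leI)
    have "{\<nu> \<in> SP. W \<mu> \<nu> < ennreal (min e1 e2)} \<subseteq> S \<inter> T"
    proof
      fix x assume x: "x \<in> {\<nu> \<in> SP. W \<mu> \<nu> < ennreal (min e1 e2)}"
      then have "W \<mu> x < ennreal e1" "W \<mu> x < ennreal e2"
        using m order_less_le_trans by blast+
      then show "x \<in> S \<inter> T" using x e by blast
    qed
    then show "\<exists>\<epsilon>>0. {\<nu> \<in> SP. W \<mu> \<nu> < ennreal \<epsilon>} \<subseteq> S \<inter> T"
      using e by (intro exI[of _ "min e1 e2"]) auto
  qed
  have U: "\<Union>K \<subseteq> SP \<and> (\<forall>\<mu>\<in>\<Union>K. \<exists>\<epsilon>>0. {\<nu> \<in> SP. W \<mu> \<nu> < ennreal \<epsilon>} \<subseteq> \<Union>K)"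
    if K: "\<forall>S\<in>K. S \<subseteq> SP \<and> (\<forall>\<mu>\<in>S. \<exists>\<epsilon>>0. {\<nu> \<in> SP. W \<mu> \<nu> < ennreal \<epsilon>} \<subseteq> S)" for K
  proof (intro conjI ballI)
    show "\<Union>K \<subseteq> SP" using K by blast
  next
    fix \<mu> assume "\<mu> \<in> \<Union>K"
    then obtain S where "S \<in> K" "\<mu> \<in> S" by blast
    then obtain e where "e > 0" "{\<nu> \<in> SP. W \<mu> \<nu> < ennreal e} \<subseteq> S"
      using K by blast
    then show "\<exists>\<epsilon>>0. {\<nu> \<in> SP. W \<mu> \<nu> < ennreal \<epsilon>} \<subseteq> \<Union>K"
      using \<open>S \<in> K\<close> by blast
  qed
  show ?thesis unfolding istopology_def using I U by blast
qed

end

theory Submission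
  imports Defs "HOL-Complex_Analysis.Complex_Analysis"
begin

text \<open>By the Jordan curve theorem an embedding \<open>c\<close> bounds a nonempty bounded open region
  \<open>\<Omega>(c)\<close> with frontier \<open>c(S\<^sup>1)\<close>, so \<open>F c\<close> is a shape measure. If \<open>c\<close> is uniformly
  \<open>d\<close>-close to \<open>c\<^sub>0\<close>, the straight-line homotopy between the two loops misses every point
  at distance \<open>\<ge> d\<close> from \<open>c\<^sub>0(S\<^sup>1)\<close>, so winding numbers, and hence membership in the
  enclosed regions, agree there: \<open>\<Omega>(c)\<close> and \<open>\<Omega>(c\<^sub>0)\<close> differ only inside the
  \<open>d\<close>-neighbourhood of the null compact set \<open>c\<^sub>0(S\<^sup>1)\<close>, whose measure tends to \<open>0\<close>.
  Two uniform measures on \<open>A, B \<subseteq> cball 0 R\<close> are coupled by leaving the common mass on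
  \<open>A \<inter> B\<close> in place, which costs at most \<open>(2R)\<^sup>2 |A \<triangle> B| / |A|\<close>. Hence
  \<open>W(F c\<^sub>0, F c) \<rightarrow> 0\<close> already under \<open>C\<^sup>0\<close>-convergence, and \<open>F\<close> is constant on
  \<open>Diff\<close>-orbits, so it descends to a continuous map on the quotient.\<close>

section \<open>The plane as the complex numbers\<close>

definition to_complex :: "real^2 \<Rightarrow> complex" where
  "to_complex x = Complex (x$1) (x$2)"

definition from_complex :: "complex \<Rightarrow> real^2" where
  "from_complex z = vector [Re z, Im z]"

lemma from_to_complex [simp]: "from_complex (to_complex x) = x"
  by (simp add: from_complex_def to_complex_def vec_eq_iff forall_2)

lemma to_from_complex [simp]: "to_complex (from_complex z) = z"
  by (simp add: from_complex_def to_complex_def complex_eq_iff)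

lemma linear_to_complex: "linear to_complex"
  by (auto simp: linear_iff to_complex_def complex_eq_iff)

lemma linear_from_complex: "linear from_complex"
  by (auto simp: linear_iff from_complex_def vec_eq_iff forall_2)

lemma inj_to_complex: "inj to_complex"
  by (metis from_to_complex injI)

lemma bij_to_complex: "bij to_complex"
  by (metis bijI inj_to_complex to_from_complex surjI)

lemma isCont_to_complex: "isCont to_complex x"
  by (simp add: linear_continuous_at linear_linear linear_to_complex)

lemma continuous_on_to_complex [continuous_intros]: "continuous_on S to_complex"
  by (simp add: continuous_at_imp_continuous_on isCont_to_complex)

lemma continuous_on_from_complex [continuous_intros]: "continuous_on S from_complex"
  by (simp add: linear_continuous_on linear_linear linear_from_complex)

lemma dist_to_complex [simp]: "dist (to_complex x) (to_complex y) = dist x y"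
  by (simp add: dist_norm to_complex_def norm_vec_def L2_set_def sum_2 cmod_def)

lemma bounded_image_to_complex_iff: "bounded (to_complex ` X) \<longleftrightarrow> bounded X"
proof
  assume "bounded (to_complex ` X)"
  then have "bounded (from_complex ` to_complex ` X)"
    by (simp add: bounded_linear_image linear_from_complex linear_linear)
  then show "bounded X" by (simp add: image_comp)
qed (simp add: bounded_linear_image linear_to_complex linear_linear)

lemma inside_image_to_complex: "inside (to_complex ` S) = to_complex ` inside S"
proof -
  have compl: "to_complex ` (- S) = - (to_complex ` S)"
    using bij_to_complex by (simp add: bij_image_Compl_eq)
  have "homeomorphism (- S) (- (to_complex ` S)) to_complex from_complex"
    unfolding homeomorphism_def using compl[symmetric]
    by (auto simp: image_comp intro!: continuous_intros)
  then have "connected_component_set (- (to_complex ` S)) (to_complex x)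
      = to_complex ` connected_component_set (- S) x" if "x \<notin> S" for x
    using that by (simp add: connected_component_set_homeomorphism)
  then have "to_complex x \<in> inside (to_complex ` S) \<longleftrightarrow> x \<in> inside S" for x
    by (cases "x \<in> S")
      (auto simp: inside_def bounded_image_to_complex_iff inj_image_mem_iff[OF inj_to_complex])
  then show ?thesis
    by (metis (no_types, lifting) image_iff set_eqI to_from_complex)
qed

lemma frontier_image_to_complex: "frontier (to_complex ` X) = to_complex ` frontier X"
proof -
  have "- (to_complex ` X) = to_complex ` (- X)"
    using bij_to_complex by (simp add: bij_image_Compl_eq)
  then show ?thesis
    using inj_to_complex
    by (simp add: frontier_closures closure_injective_linear_image[OF linear_to_complex inj_to_complex] image_Int)
qed

lemma periodic_add_of_int:
  fixes p :: "real \<Rightarrow> 'a"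
  assumes "\<And>t. p (t + 1) = p t"
  shows "p (t + of_int n) = p t"
proof -
  have pos: "p (t + of_nat m) = p t" for t m
  proof (induction m)
    case (Suc m)
    have "t + of_nat (Suc m) = (t + of_nat m) + 1" by simp
    then show ?case using assms[of "t + of_nat m"] Suc.IH by metis
  qed simp
  show ?thesis
  proof (cases "n \<ge> 0")
    case True
    then show ?thesis using pos[of t "nat n"] by simp
  next
    case False
    then show ?thesis using pos[of "t + of_int n" "nat (- n)"] by simp
  qed
qed

lemma range_periodic:
  fixes p :: "real \<Rightarrow> 'a"
  assumes "\<And>t. p (t + 1) = p t"
  shows "range p = p ` {a..a+1}"
proof -
  have "p t \<in> p ` {a..a+1}" for t
  proof
    show "p t = p (t - of_int \<lfloor>t - a\<rfloor>)"
      using periodic_add_of_int[of p "t" "- \<lfloor>t - a\<rfloor>"] assms by simp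
    show "t - of_int \<lfloor>t - a\<rfloor> \<in> {a..a+1}"
      using floor_correct[of "t - a"] by (auto simp: algebra_simps)
  qed
  then show ?thesis by blast
qed

lemma ecirc_periodic [simp]: "ecirc (t + 1) = ecirc t"
proof -
  have "2 * pi * (t + 1) = 2 * pi * t + 2 * pi" by (simp add: algebra_simps)
  then show ?thesis by (simp add: ecirc_def)
qed

lemma ecirc_eq_iff: "ecirc s = ecirc t \<longleftrightarrow> (\<exists>n::int. s = t + of_int n)"
proof
  assume "ecirc s = ecirc t"
  then have "cos (2 * pi * s) = cos (2 * pi * t)" "sin (2 * pi * s) = sin (2 * pi * t)"
    by (metis ecirc_def vector_2)+
  then obtain n :: int where "2 * pi * s = 2 * pi * t + 2 * pi * of_int n"
    using sin_cos_eq_iff by metis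
  then have "2 * pi * (s - t - of_int n) = 0" by (simp add: algebra_simps)
  then have "s = t + of_int n" by simp
  then show "\<exists>n::int. s = t + of_int n" by blast
next
  assume "\<exists>n::int. s = t + of_int n"
  then show "ecirc s = ecirc t" using periodic_add_of_int[of ecirc t] by auto
qed

lemma range_ecirc: "range ecirc = S1"
proof
  show "range ecirc \<subseteq> S1" by (auto simp: S1_def ecirc_def norm_vec_def L2_set_def sum_2)
  show "S1 \<subseteq> range ecirc"
  proof
    fix x :: "real^2" assume "x \<in> S1"
    then have "(x$1)\<^sup>2 + (x$2)\<^sup>2 = 1"
      by (simp add: S1_def norm_vec_def L2_set_def sum_2)
    then obtain t where t: "x$1 = cos t" "x$2 = sin t"
      using sincos_total_2pi by metis
    have "ecirc (t / (2 * pi)) = x" using t by (simp add: ecirc_def vec_eq_iff forall_2)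
    then show "x \<in> range ecirc" by (metis rangeI)
  qed
qed

lemma ecirc_in_S1 [simp]: "ecirc t \<in> S1"
  using range_ecirc by blast

lemma image_S1_eq_range: "c ` S1 = range (c \<circ> ecirc)"
  by (simp add: range_ecirc[symmetric] image_comp)

lemma image_S1_eq_Icc: "c ` S1 = (c \<circ> ecirc) ` {0..1}"
  using range_periodic[of "c \<circ> ecirc" 0] by (simp add: image_S1_eq_range)

definition trig_curve :: "real^2 \<Rightarrow> real^2 \<Rightarrow> real \<Rightarrow> real^2" where
  "trig_curve u v t = cos (2 * pi * t) *\<^sub>R u + sin (2 * pi * t) *\<^sub>R v"

lemma trig_curve_has_vector_derivative:
  "(trig_curve u v has_vector_derivative trig_curve ((2 * pi) *\<^sub>R v) (- (2 * pi) *\<^sub>R u) t) (at t)"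
  unfolding trig_curve_def[abs_def]
  by (auto intro!: derivative_eq_intros simp: algebra_simps)

lemma Dk_ecirc: "\<exists>u v. Dk k ecirc = trig_curve u v"
proof (induction k)
  case 0
  have "ecirc = trig_curve (vector [1, 0]) (vector [0, 1])"
    by (rule ext) (simp add: ecirc_def trig_curve_def vec_eq_iff forall_2)
  then show ?case by auto
next
  case (Suc k)
  then obtain u v where "Dk k ecirc = trig_curve u v" by blast
  then have "Dk (Suc k) ecirc = trig_curve ((2 * pi) *\<^sub>R v) (- (2 * pi) *\<^sub>R u)"
    by (auto simp: vector_derivative_at[OF trig_curve_has_vector_derivative])
  then show ?case by blast
qed

lemma smooth_ecirc: "smooth_on UNIV ecirc"
  unfolding smooth_on_def
  by (metis Dk_ecirc trig_curve_has_vector_derivative differentiableI_vector)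

lemma smooth_on_differentiable: "smooth_on S g \<Longrightarrow> t \<in> S \<Longrightarrow> g differentiable (at t)"
  unfolding smooth_on_def by (metis Dk.simps(1))

lemma Cinf_differentiable: "c \<in> Cinf \<Longrightarrow> (c \<circ> ecirc) differentiable (at t)"
  unfolding Cinf_def using smooth_on_differentiable by blast

lemma Cinf_continuous_on: "c \<in> Cinf \<Longrightarrow> continuous_on S (c \<circ> ecirc)"
  by (meson Cinf_differentiable continuous_at_imp_continuous_on differentiable_imp_continuous_within)

lemma compact_image_S1: "c \<in> Cinf \<Longrightarrow> compact (c ` S1)"
  unfolding image_S1_eq_Icc by (intro compact_continuous_image Cinf_continuous_on) auto

lemma Emb_loop_eqD:
  assumes "c \<in> Emb" "(c \<circ> ecirc) s = (c \<circ> ecirc) t"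
  shows "\<exists>n::int. s = t + of_int n"
proof -
  have "inj_on c S1" using assms(1) by (simp add: Emb_def)
  then have "ecirc s = ecirc t" using assms(2) by (simp add: inj_on_eq_iff)
  then show ?thesis by (simp add: ecirc_eq_iff)
qed

lemma Emb_inj_on_short_interval:
  assumes "c \<in> Emb" "b - a < 1"
  shows "inj_on (c \<circ> ecirc) {a..b}"
proof (rule inj_onI)
  fix x y assume xy: "x \<in> {a..b}" "y \<in> {a..b}" "(c \<circ> ecirc) x = (c \<circ> ecirc) y"
  then obtain n :: int where n: "x = y + of_int n" using Emb_loop_eqD[OF assms(1)] by blast
  then have "\<bar>of_int n\<bar> < (1::real)" using xy assms(2) by auto
  then show "x = y" using n by simp
qed

lemma Emb_image_S1_minus_arc:
  assumes "c \<in> Emb" "a \<le> b" "b \<le> a + 1"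
  shows "c ` S1 - (c \<circ> ecirc) ` {b..a+1} = (c \<circ> ecirc) ` {a<..<b}"
proof -
  define p where "p = c \<circ> ecirc"
  have disj: "p s \<noteq> p r" if "s \<in> {a<..<b}" "r \<in> {b..a+1}" for s r
  proof
    assume "p s = p r"
    then obtain n :: int where "s = r + of_int n" using Emb_loop_eqD[OF assms(1)] p_def by blast
    moreover have "-1 < s - r" "s - r < 0" using that by auto
    ultimately show False by simp
  qed
  have "p a = p (a + 1)" by (simp add: p_def)
  then have "p a \<in> p ` {b..a+1}" using assms(3) by auto
  moreover have "{a..a+1} = insert a ({a<..<b} \<union> {b..a+1})" using assms(2,3) by auto
  ultimately have "p ` {a..a+1} = p ` {a<..<b} \<union> p ` {b..a+1}" by auto
  moreover have "c ` S1 = p ` {a..a+1}"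
    unfolding image_S1_eq_range p_def by (rule range_periodic) simp
  ultimately have "c ` S1 = p ` {a<..<b} \<union> p ` {b..a+1}" by simp
  moreover have "p ` {a<..<b} \<inter> p ` {b..a+1} = {}" using disj by blast
  ultimately show ?thesis unfolding p_def[symmetric] by blast
qed

text \<open>A chart around \<open>c(ecirc t\<^sub>0)\<close>: the arc over \<open>]t\<^sub>0 - 1/3, t\<^sub>0 + 1/3[\<close>, cut out of the curve by
  removing the complementary closed arc.\<close>

lemma Emb_smooth_curve_set:
  assumes "c \<in> Emb"
  shows "smooth_curve_set (c ` S1)"
  unfolding smooth_curve_set_def
proof
  fix P0 assume "P0 \<in> c ` S1"
  define p where "p = c \<circ> ecirc"
  have cin: "c \<in> Cinf" using assms by (simp add: Emb_def)
  obtain t0 where t0: "P0 = p t0" using \<open>P0 \<in> c ` S1\<close> by (auto simp: p_def image_S1_eq_range)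
  define a where "a = t0 - 1/3"
  define b where "b = t0 + 1/3"
  define C where "C = p ` {b..a+1}"
  have "a < b" "t0 \<in> {a<..<b}" by (simp_all add: a_def b_def)
  have arc: "c ` S1 \<inter> - C = p ` {a<..<b}"
    using Emb_image_S1_minus_arc[OF assms, of a b] by (auto simp: C_def p_def a_def b_def)
  have "compact C"
    unfolding C_def p_def by (intro compact_continuous_image Cinf_continuous_on cin compact_Icc)
  then have "open (- C)" by (simp add: compact_imp_closed open_Compl)
  moreover have "P0 \<in> - C" using arc t0 \<open>t0 \<in> {a<..<b}\<close> by blast
  moreover have "inj_on p {a..b}"
    unfolding p_def by (rule Emb_inj_on_short_interval[OF assms]) (simp add: a_def b_def)
  then obtain g where "homeomorphism {a..b} (p ` {a..b}) p g"
    using homeomorphism_compact[OF compact_Icc Cinf_continuous_on[OF cin] refl] by (metis p_def)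
  then have "homeomorphism {a<..<b} (c ` S1 \<inter> - C) p g"
    using homeomorphism_of_subsets[of "{a..b}" "p ` {a..b}" p g "{a<..<b}" "{}"] arc
    by (simp add: greaterThanLessThan_subseteq_atLeastAtMost_iff)
  moreover have "smooth_on {a<..<b} p"
    using cin by (auto simp: Cinf_def p_def smooth_on_def)
  moreover have "\<forall>t\<in>{a<..<b}. vector_derivative p (at t) \<noteq> 0"
    using assms by (simp add: Emb_def p_def)
  ultimately show "\<exists>U a b \<gamma>. open U \<and> P0 \<in> U \<and> a < b \<and> smooth_on {a<..<b} \<gamma> \<and>
      (\<forall>t\<in>{a<..<b}. vector_derivative \<gamma> (at t) \<noteq> 0) \<and>
      (\<exists>g. homeomorphism {a<..<b} (c ` S1 \<inter> U) \<gamma> g)"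
    using \<open>a < b\<close> by blast
qed

section \<open>The region enclosed by an embedding\<close>

lemma Union_bounded_components_eq_inside:
  "\<Union>{C \<in> components (- K). bounded C} = inside K"
proof
  show "\<Union>{C \<in> components (- K). bounded C} \<subseteq> inside K"
  proof
    fix y assume "y \<in> \<Union>{C \<in> components (- K). bounded C}"
    then obtain x where x: "x \<in> - K" "bounded (connected_component_set (- K) x)"
      "y \<in> connected_component_set (- K) x"
      by (auto simp: components_iff)
    then have "connected_component_set (- K) y = connected_component_set (- K) x"
      by (meson connected_component_eq mem_Collect_eq)
    then show "y \<in> inside K" using x
      by (auto simp: inside_def dest: connected_component_in)
  qed
next
  show "inside K \<subseteq> \<Union>{C \<in> components (- K). bounded C}"
  proof
    fix y assume "y \<in> inside K"
    then have "y \<in> - K" "bounded (connected_component_set (- K) y)"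
      by (auto simp: inside_def)
    then show "y \<in> \<Union>{C \<in> components (- K). bounded C}"
      by (auto simp: components_iff intro!: exI[of _ "connected_component_set (- K) y"])
  qed
qed

definition complex_loop :: "(real^2 \<Rightarrow> real^2) \<Rightarrow> real \<Rightarrow> complex" where
  "complex_loop c = to_complex \<circ> (c \<circ> ecirc)"

lemma path_image_complex_loop: "path_image (complex_loop c) = to_complex ` c ` S1"
  unfolding path_image_def complex_loop_def by (simp add: image_S1_eq_Icc image_comp)

lemma Omega_eq_vimage: "Omega c = to_complex -` inside (path_image (complex_loop c))"
  by (simp add: Omega_def Union_bounded_components_eq_inside path_image_complex_loop
      inside_image_to_complex inj_vimage_image_eq[OF inj_to_complex])

lemma Emb_simple_closed_loop:
  assumes "c \<in> Emb"
  shows "simple_path (complex_loop c)" "pathfinish (complex_loop c) = pathstart (complex_loop c)"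
proof -
  have cin: "c \<in> Cinf" using assms by (simp add: Emb_def)
  have "path (complex_loop c)" unfolding path_def complex_loop_def
    by (rule continuous_on_compose[OF Cinf_continuous_on[OF cin] continuous_on_to_complex])
  moreover have "loop_free (complex_loop c)"
    unfolding loop_free_def
  proof (intro ballI impI)
    fix x y :: real assume xy: "x \<in> {0..1}" "y \<in> {0..1}" "complex_loop c x = complex_loop c y"
    then have "(c \<circ> ecirc) x = (c \<circ> ecirc) y"
      unfolding complex_loop_def using inj_to_complex by (auto dest: injD)
    then obtain n :: int where n: "x = y + of_int n" using Emb_loop_eqD[OF assms] by blast
    then have "n \<in> {-1, 0, 1}" using xy by auto
    then show "x = y \<or> x = 0 \<and> y = 1 \<or> x = 1 \<and> y = 0" using n xy by auto
  qed
  ultimately show "simple_path (complex_loop c)" by (simp add: simple_path_def)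
  show "pathfinish (complex_loop c) = pathstart (complex_loop c)"
    unfolding pathfinish_def pathstart_def complex_loop_def
    using ecirc_periodic[of 0] by simp
qed

lemma Omega_Emb:
  assumes "c \<in> Emb"
  shows "open (Omega c)" "Omega c \<noteq> {}" "bounded (Omega c)" "frontier (Omega c) = c ` S1"
proof -
  note J = Jordan_inside_outside[OF Emb_simple_closed_loop[OF assms]]
  have img: "to_complex ` Omega c = inside (path_image (complex_loop c))"
    by (simp add: Omega_eq_vimage surj_image_vimage_eq bij_is_surj[OF bij_to_complex])
  show "open (Omega c)"
    unfolding Omega_eq_vimage using J by (simp add: continuous_open_vimage isCont_to_complex)
  show "Omega c \<noteq> {}" using J img by auto
  show "bounded (Omega c)" using J img bounded_image_to_complex_iff by metis
  have "to_complex ` frontier (Omega c) = to_complex ` c ` S1"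
    using J by (simp add: frontier_image_to_complex[symmetric] img path_image_complex_loop)
  then show "frontier (Omega c) = c ` S1"
    using inj_to_complex by (simp add: inj_image_eq_iff)
qed

lemma emeasure_lborel_open_pos:
  fixes A :: "'a::euclidean_space set"
  assumes "open A" "A \<noteq> {}"
  shows "0 < emeasure lborel A"
proof -
  obtain a b where ab: "box a b \<subseteq> A" "\<forall>i\<in>Basis. a \<bullet> i < b \<bullet> i"
    using open_contains_box[OF assms(1)] assms(2) by (metis ex_in_conv)
  have "0 < (\<Prod>i\<in>Basis. (b - a) \<bullet> i)"
    using ab by (intro prod_pos) (auto simp: inner_diff_left)
  then have "0 < emeasure lborel (box a b)"
    using ab by (subst emeasure_lborel_box) auto
  also have "\<dots> \<le> emeasure lborel A"
    using ab assms by (intro emeasure_mono) auto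
  finally show ?thesis .
qed

lemma F_in_SP:
  assumes "c \<in> Emb"
  shows "F c \<in> SP"
proof -
  note O = Omega_Emb[OF assms]
  have cin: "c \<in> Cinf" using assms by (simp add: Emb_def)
  have "connected (c ` S1)"
    unfolding image_S1_eq_Icc by (rule connected_continuous_image[OF Cinf_continuous_on[OF cin] connected_Icc])
  then show ?thesis
    unfolding SP_def F_def
    using O emeasure_lborel_open_pos[OF O(1,2)] emeasure_bounded_finite[OF O(3)]
      Emb_smooth_curve_set[OF assms]
    by auto
qed

lemma inside_iff_winding_number:
  assumes "simple_path g" "pathfinish g = pathstart g" "z \<notin> path_image g"
  shows "z \<in> inside (path_image g) \<longleftrightarrow> winding_number g z \<noteq> 0"
proof
  assume "z \<in> inside (path_image g)"
  then have "norm (winding_number g z) = 1"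
    using simple_closed_path_norm_winding_number_inside assms by blast
  then show "winding_number g z \<noteq> 0" by auto
next
  assume "winding_number g z \<noteq> 0"
  moreover have "z \<notin> outside (path_image g) \<or> winding_number g z = 0"
    using winding_number_zero_in_outside assms simple_path_imp_path by blast
  ultimately show "z \<in> inside (path_image g)"
    using assms(3) by (metis ComplI UnE inside_Un_outside)
qed

text \<open>The straight-line homotopy between the two loops avoids \<open>x\<close>, so their winding numbers
  around \<open>x\<close> agree.\<close>

lemma Omega_stable:
  assumes c0: "c0 \<in> Emb" and c: "c \<in> Emb"
    and close: "\<And>t. norm ((c \<circ> ecirc) t - (c0 \<circ> ecirc) t) < d"
    and far: "\<And>y. y \<in> c0 ` S1 \<Longrightarrow> d \<le> dist x y"
  shows "x \<in> Omega c \<longleftrightarrow> x \<in> Omega c0"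
proof -
  define z where "z = to_complex x"
  define q0 where "q0 = complex_loop c0"
  define q where "q = complex_loop c"
  note s0 = Emb_simple_closed_loop[OF c0, folded q0_def]
  note s = Emb_simple_closed_loop[OF c, folded q_def]
  have q_dist: "dist (q0 t) (q t) < d" for t
    using close[of t] unfolding q_def q0_def complex_loop_def comp_def dist_to_complex
    by (simp add: dist_norm norm_minus_commute)
  have z_far: "d \<le> dist z (q0 t)" for t
    using far[of "c0 (ecirc t)"] by (simp add: z_def q0_def complex_loop_def)
  have "0 < d" using zero_le_dist[of "q0 0" "q 0"] q_dist[of 0] by linarith
  have z0: "z \<notin> path_image q0"
  proof
    assume "z \<in> path_image q0"
    then obtain t where "z = q0 t" by (auto simp: path_image_def)
    then show False using z_far[of t] \<open>0 < d\<close> by simp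
  qed
  have z1: "z \<notin> path_image q"
  proof
    assume "z \<in> path_image q"
    then obtain t where "z = q t" by (auto simp: path_image_def)
    then show False using z_far[of t] q_dist[of t] by (simp add: dist_commute)
  qed
  have "homotopic_loops (- {z}) q0 q"
  proof (rule homotopic_loops_linear)
    show "path q0" "path q" using s0(1) s(1) simple_path_imp_path by blast+
    show "pathfinish q0 = pathstart q0" "pathfinish q = pathstart q" using s0(2) s(2) by auto
    fix t :: real assume "t \<in> {0..1}"
    show "closed_segment (q0 t) (q t) \<subseteq> - {z}"
    proof
      fix w assume w: "w \<in> closed_segment (q0 t) (q t)"
      have "dist w (q0 t) \<le> dist (q0 t) (q t)" using dist_in_closed_segment[OF w] by blast
      then show "w \<in> - {z}" using q_dist[of t] z_far[of t] by auto
    qed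
  qed
  then have "winding_number q0 z = winding_number q z"
    by (rule winding_number_homotopic_loops)
  then show ?thesis
    using inside_iff_winding_number[OF s(1,2) z1] inside_iff_winding_number[OF s0(1,2) z0]
    by (simp add: Omega_eq_vimage q_def q0_def z_def)
qed

section \<open>Couplings of uniform measures\<close>

definition sum_measure :: "'a measure \<Rightarrow> 'a measure \<Rightarrow> 'a measure" where
  "sum_measure M N = measure_of (space M) (sets M) (\<lambda>X. emeasure M X + emeasure N X)"

lemma sets_sum_measure [simp]: "sets (sum_measure M N) = sets M"
  by (simp add: sum_measure_def sets.sets_measure_of_eq)

lemma emeasure_sum_measure:
  assumes "sets N = sets M" "X \<in> sets M"
  shows "emeasure (sum_measure M N) X = emeasure M X + emeasure N X"
proof -
  have "countably_additive (sets M) (\<lambda>X. emeasure M X + emeasure N X)"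
    unfolding countably_additive_def
  proof (intro allI impI)
    fix F :: "nat \<Rightarrow> 'a set"
    assume F: "range F \<subseteq> sets M" "disjoint_family F" "\<Union> (range F) \<in> sets M"
    have "(\<Sum>i. emeasure M (F i) + emeasure N (F i)) = (\<Sum>i. emeasure M (F i)) + (\<Sum>i. emeasure N (F i))"
      by (rule suminf_add[symmetric]) auto
    also have "\<dots> = emeasure M (\<Union> (range F)) + emeasure N (\<Union> (range F))"
      using suminf_emeasure[OF F(1,2)] suminf_emeasure[of F N] F assms(1) by simp
    finally show "(\<Sum>i. emeasure M (F i) + emeasure N (F i))
        = emeasure M (\<Union> (range F)) + emeasure N (\<Union> (range F))" .
  qed
  then show ?thesis
    unfolding sum_measure_def using assms(2)
    by (intro emeasure_measure_of_sigma sets.sigma_algebra_axioms) (auto simp: positive_def)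
qed

lemma couplings_emeasure_Times:
  assumes "\<gamma> \<in> couplings \<mu> \<nu>" "X \<in> sets borel"
  shows "emeasure \<gamma> (X \<times> UNIV) = emeasure \<mu> X" "emeasure \<gamma> (UNIV \<times> X) = emeasure \<nu> X"
proof -
  have s: "sets \<gamma> = sets (borel \<Otimes>\<^sub>M borel)" and sp: "space \<gamma> = UNIV"
    using assms(1) sets_eq_imp_space_eq[of \<gamma> "borel \<Otimes>\<^sub>M borel"]
    by (auto simp: couplings_def space_pair_measure)
  have "fst \<in> measurable \<gamma> borel" "snd \<in> measurable \<gamma> borel"
    by (simp_all add: measurable_cong_sets[OF s refl])
  then have "emeasure (distr \<gamma> borel fst) X = emeasure \<gamma> (X \<times> UNIV)"
    "emeasure (distr \<gamma> borel snd) X = emeasure \<gamma> (UNIV \<times> X)"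
    using assms(2) by (simp_all add: emeasure_distr sp vimage_fst vimage_snd)
  then show "emeasure \<gamma> (X \<times> UNIV) = emeasure \<mu> X" "emeasure \<gamma> (UNIV \<times> X) = emeasure \<nu> X"
    using assms(1) by (auto simp: couplings_def)
qed

lemma couplingsI:
  assumes s: "sets \<gamma> = sets (borel \<Otimes>\<^sub>M borel)" "sets \<mu> = sets borel" "sets \<nu> = sets borel"
    and prob: "emeasure \<mu> UNIV = 1"
    and marg: "\<And>X. X \<in> sets borel \<Longrightarrow> emeasure \<gamma> (X \<times> UNIV) = emeasure \<mu> X"
      "\<And>X. X \<in> sets borel \<Longrightarrow> emeasure \<gamma> (UNIV \<times> X) = emeasure \<nu> X"
  shows "\<gamma> \<in> couplings \<mu> \<nu>"
proof -
  have sp: "space \<gamma> = UNIV"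
    using sets_eq_imp_space_eq[OF s(1)] by (simp add: space_pair_measure)
  have "fst \<in> measurable \<gamma> borel" "snd \<in> measurable \<gamma> borel"
    by (simp_all add: measurable_cong_sets[OF s(1) refl])
  then have "distr \<gamma> borel fst = \<mu>" "distr \<gamma> borel snd = \<nu>"
    using s marg by (auto intro!: measure_eqI simp: emeasure_distr sp vimage_fst vimage_snd)
  moreover have "prob_space \<gamma>"
    using marg(1)[of UNIV] prob by (intro prob_spaceI) (simp add: sp)
  ultimately show ?thesis using s(1) by (simp add: couplings_def)
qed

lemma offdiagonal_in_sets: "{z :: (real^2) \<times> (real^2). fst z \<noteq> snd z} \<in> sets (borel \<Otimes>\<^sub>M borel)"
proof -
  have "closed {z :: (real^2) \<times> (real^2). fst z = snd z}"
    by (intro closed_Collect_eq continuous_intros)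
  then show ?thesis unfolding borel_prod by (simp add: open_Collect_neg)
qed

lemma ennreal_rescale:
  assumes "r \<le> ennreal w"
  shows "ennreal (1 / w) * (r * ennreal w) = r"
proof (cases "w \<le> 0")
  case True
  then show ?thesis using assms by (simp add: ennreal_neg)
next
  case False
  then have "ennreal (1 / w) * ennreal w = 1" by (simp add: ennreal_mult''[symmetric])
  then show ?thesis by (metis mult.assoc mult.commute mult.right_neutral)
qed

text \<open>The common part \<open>D\<close> stays on the diagonal; the remainders \<open>R\<^sub>1\<close>, \<open>R\<^sub>2\<close>, both of mass
  \<open>w\<close>, are coupled independently. For \<open>w = 0\<close> the junk value \<open>1 / 0 = 0\<close> is harmless, since
  the remainders are then null.\<close>

definition common_part_coupling ::
    "(real^2) measure \<Rightarrow> (real^2) measure \<Rightarrow> (real^2) measure \<Rightarrow> real \<Rightarrow> ((real^2) \<times> (real^2)) measure"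
  where "common_part_coupling D R1 R2 w =
    sum_measure (distr D (borel \<Otimes>\<^sub>M borel) (\<lambda>x. (x, x))) (scale_measure (ennreal (1 / w)) (R1 \<Otimes>\<^sub>M R2))"

lemma sets_common_part_coupling [simp]:
  "sets (common_part_coupling D R1 R2 w) = sets (borel \<Otimes>\<^sub>M borel)"
  by (simp add: common_part_coupling_def)

lemma emeasure_common_part_coupling:
  assumes sets: "sets D = sets borel" "sets R1 = sets borel" "sets R2 = sets borel"
    and Z: "Z \<in> sets (borel \<Otimes>\<^sub>M borel)"
  shows "emeasure (common_part_coupling D R1 R2 w) Z
    = emeasure D ((\<lambda>x. (x, x)) -` Z) + ennreal (1 / w) * emeasure (R1 \<Otimes>\<^sub>M R2) Z"
proof -
  have "(\<lambda>x. (x, x)) \<in> measurable D (borel \<Otimes>\<^sub>M borel)"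
    by (simp add: measurable_cong_sets[OF sets(1) refl])
  moreover have "space D = UNIV" using sets_eq_imp_space_eq[OF sets(1)] by simp
  moreover have "sets (scale_measure (ennreal (1 / w)) (R1 \<Otimes>\<^sub>M R2)) = sets (borel \<Otimes>\<^sub>M borel)"
    by (simp add: sets cong: sets_pair_measure_cong)
  ultimately show ?thesis
    using Z by (simp add: common_part_coupling_def emeasure_sum_measure emeasure_distr)
qed

lemma
  fixes \<mu> \<nu> D R1 R2 :: "(real^2) measure"
  assumes sets: "sets \<mu> = sets borel" "sets \<nu> = sets borel" "sets D = sets borel"
      "sets R1 = sets borel" "sets R2 = sets borel"
    and prob: "emeasure \<mu> UNIV = 1"
    and mass: "emeasure R1 UNIV = ennreal w" "emeasure R2 UNIV = ennreal w"
    and \<mu>: "\<And>X. X \<in> sets borel \<Longrightarrow> emeasure \<mu> X = emeasure D X + emeasure R1 X"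
    and \<nu>: "\<And>X. X \<in> sets borel \<Longrightarrow> emeasure \<nu> X = emeasure D X + emeasure R2 X"
  shows common_part_coupling_in_couplings: "common_part_coupling D R1 R2 w \<in> couplings \<mu> \<nu>"
    and emeasure_offdiagonal_common_part_coupling:
      "emeasure (common_part_coupling D R1 R2 w) {z. fst z \<noteq> snd z} \<le> ennreal w"
proof -
  have sp: "space R1 = UNIV" "space R2 = UNIV"
    using sets_eq_imp_space_eq[OF sets(4)] sets_eq_imp_space_eq[OF sets(5)] by simp_all
  interpret R2: finite_measure R2
    by (rule finite_measureI) (simp add: sp mass)
  note emeasure_\<gamma> = emeasure_common_part_coupling[OF sets(3-5)]
  have R_le: "emeasure R1 X \<le> ennreal w" "emeasure R2 X \<le> ennreal w" for X
    using emeasure_space[of R1 X] emeasure_space[of R2 X] by (simp_all add: sp mass)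
  have Times: "emeasure (common_part_coupling D R1 R2 w) (X \<times> Y)
      = emeasure D (X \<inter> Y) + ennreal (1 / w) * (emeasure R1 X * emeasure R2 Y)"
    if "X \<in> sets borel" "Y \<in> sets borel" for X Y
    using that by (simp add: emeasure_\<gamma> R2.emeasure_pair_measure_Times sets vimage_def Int_def)
  show "common_part_coupling D R1 R2 w \<in> couplings \<mu> \<nu>"
  proof (rule couplingsI[OF _ sets(1,2) prob])
    fix X :: "(real^2) set" assume X: "X \<in> sets borel"
    show "emeasure (common_part_coupling D R1 R2 w) (X \<times> UNIV) = emeasure \<mu> X"
      using Times[OF X sets.top] ennreal_rescale[OF R_le(1)] \<mu>[OF X] by (simp add: mass)
    show "emeasure (common_part_coupling D R1 R2 w) (UNIV \<times> X) = emeasure \<nu> X"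
      using Times[OF sets.top X] ennreal_rescale[OF R_le(2)] \<nu>[OF X] by (simp add: mass mult.commute)
  qed simp
  have "emeasure (R1 \<Otimes>\<^sub>M R2) {z. fst z \<noteq> snd z} \<le> emeasure (R1 \<Otimes>\<^sub>M R2) (UNIV \<times> UNIV)"
    using emeasure_space[of "R1 \<Otimes>\<^sub>M R2"] by (simp add: space_pair_measure sp)
  also have "\<dots> = ennreal w * ennreal w"
    using R2.emeasure_pair_measure_Times[where A = UNIV and B = UNIV and N = R1] by (simp add: sets mass)
  finally have "ennreal (1 / w) * emeasure (R1 \<Otimes>\<^sub>M R2) {z. fst z \<noteq> snd z}
      \<le> ennreal (1 / w) * (ennreal w * ennreal w)"
    by (rule mult_left_mono) simp
  also have "\<dots> = ennreal w" by (rule ennreal_rescale) simp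
  finally show "emeasure (common_part_coupling D R1 R2 w) {z. fst z \<noteq> snd z} \<le> ennreal w"
    by (simp add: emeasure_\<gamma>[OF offdiagonal_in_sets] vimage_def)
qed

lemma W2sq_le_offdiagonal:
  assumes \<gamma>: "\<gamma> \<in> couplings \<mu> \<nu>"
    and null: "emeasure \<mu> (- cball 0 R) = 0" "emeasure \<nu> (- cball 0 R) = 0"
  shows "W2sq \<mu> \<nu> \<le> ennreal ((2 * R)\<^sup>2) * emeasure \<gamma> {z. fst z \<noteq> snd z}"
proof -
  define K where "K = cball (0::real^2) R"
  have s\<gamma>: "sets \<gamma> = sets (borel \<Otimes>\<^sub>M borel)" using \<gamma> by (simp add: couplings_def)
  have off: "{z :: (real^2) \<times> (real^2). fst z \<noteq> snd z} \<in> sets \<gamma>"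
    unfolding s\<gamma> by (rule offdiagonal_in_sets)
  have N: "(- K) \<times> UNIV \<union> UNIV \<times> (- K) \<in> null_sets \<gamma>"
    using couplings_emeasure_Times[OF \<gamma>, of "- K"] null s\<gamma>
    by (intro null_sets.Un) (auto simp: K_def null_sets_def)
  have bound: "ennreal ((norm (fst z - snd z))\<^sup>2) \<le> ennreal ((2 * R)\<^sup>2) * indicator {z. fst z \<noteq> snd z} z"
    if "z \<notin> (- K) \<times> UNIV \<union> UNIV \<times> (- K)" for z
  proof (cases "fst z = snd z")
    case False
    have "norm (fst z - snd z) \<le> norm (fst z) + norm (snd z)" by (rule norm_triangle_ineq4)
    also have "\<dots> \<le> 2 * R" using that by (auto simp: K_def mem_Times_iff)
    finally have "(norm (fst z - snd z))\<^sup>2 \<le> (2 * R)\<^sup>2" by (intro power_mono) auto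
    then show ?thesis using False by (simp add: ennreal_leI)
  qed simp
  have "AE z in \<gamma>. ennreal ((norm (fst z - snd z))\<^sup>2)
      \<le> ennreal ((2 * R)\<^sup>2) * indicator {z. fst z \<noteq> snd z} z"
    by (rule AE_I'[OF N]) (use bound in blast)
  then have "(\<integral>\<^sup>+ z. ennreal ((norm (fst z - snd z))\<^sup>2) \<partial>\<gamma>)
      \<le> (\<integral>\<^sup>+ z. ennreal ((2 * R)\<^sup>2) * indicator {z. fst z \<noteq> snd z} z \<partial>\<gamma>)"
    by (rule nn_integral_mono_AE)
  also have "\<dots> = ennreal ((2 * R)\<^sup>2) * emeasure \<gamma> {z. fst z \<noteq> snd z}"
    using off by (rule nn_integral_cmult_indicator)
  finally show ?thesis
    unfolding W2sq_def using \<gamma> by (meson INF_lower order_trans)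
qed

lemma emeasure_density_indicator_divide:
  assumes "C \<in> sets borel" "emeasure lborel C \<noteq> \<infinity>" "0 < M"
  shows "emeasure (density lborel (\<lambda>x. ennreal (indicator C x / M))) UNIV = ennreal (measure lborel C / M)"
proof -
  have "emeasure (density lborel (\<lambda>x. ennreal (indicator C x / M))) UNIV
      = (\<integral>\<^sup>+ x. ennreal (1 / M) * indicator C x \<partial>lborel)"
    using assms(1) by (subst emeasure_density) (auto intro!: nn_integral_cong simp: indicator_def)
  also have "\<dots> = ennreal (1 / M) * emeasure lborel C"
    using assms(1) by (intro nn_integral_cmult_indicator) simp
  also have "\<dots> = ennreal (measure lborel C / M)"
    using assms(2,3) by (simp add: emeasure_eq_ennreal_measure ennreal_mult''[symmetric])
  finally show ?thesis .
qed

lemma uniform_measure_common_part: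
  fixes A C :: "'a::euclidean_space set"
  assumes [measurable]: "A \<in> sets borel" "C \<in> sets borel" and "C \<subseteq> A"
    and pos: "0 < emeasure lborel A" and fin: "emeasure lborel A < \<infinity>"
    and M: "measure lborel A \<le> M"
  shows "\<exists>R. sets R = sets borel \<and> emeasure R UNIV = ennreal (1 - measure lborel C / M) \<and>
    (\<forall>X\<in>sets borel. emeasure (uniform_measure lborel A) X
        = emeasure (density lborel (\<lambda>x. ennreal (indicator C x / M))) X + emeasure R X)"
proof -
  define a where "a = measure lborel A"
  define D where "D = density lborel (\<lambda>x. ennreal (indicator C x / M))"
  define f where "f x = indicator A x / a - indicator C x / M" for x
  define R where "R = density lborel (\<lambda>x. ennreal (f x))"
  have [measurable]: "f \<in> borel_measurable borel" unfolding f_def by measurable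
  have eA: "emeasure lborel A = ennreal a"
    using fin by (simp add: a_def emeasure_eq_ennreal_measure)
  have a: "0 < a" using pos eA by simp
  have M0: "0 < M" using a M by (simp add: a_def)
  have f0: "0 \<le> f x" for x
    using \<open>C \<subseteq> A\<close> M0 a M frac_le[of 1 1 a M] by (auto simp: f_def a_def[symmetric] indicator_def)
  have split: "emeasure (uniform_measure lborel A) X = emeasure D X + emeasure R X"
    if [measurable]: "X \<in> sets borel" for X
  proof -
    have "indicator A x / emeasure lborel A = ennreal (indicator C x / M) + ennreal (f x)" for x
    proof -
      have "ennreal (indicator C x / M) + ennreal (f x) = ennreal (indicator A x / a)"
        using f0[of x] M0 by (simp add: f_def flip: ennreal_plus)
      also have "\<dots> = ennreal (indicator A x) / ennreal a" using a by (simp add: divide_ennreal)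
      finally show ?thesis by (simp add: eA ennreal_indicator)
    qed
    then have "emeasure (uniform_measure lborel A) X
        = (\<integral>\<^sup>+ x. ennreal (indicator C x / M) * indicator X x + ennreal (f x) * indicator X x \<partial>lborel)"
      unfolding uniform_measure_def by (subst emeasure_density) (auto simp: distrib_right)
    also have "\<dots> = emeasure D X + emeasure R X"
      by (subst nn_integral_add) (auto simp: D_def R_def f_def emeasure_density)
    finally show ?thesis .
  qed
  have "emeasure lborel C \<noteq> \<infinity>"
    using fin emeasure_mono[OF \<open>C \<subseteq> A\<close>, of lborel] by (auto simp: top_unique)
  then have DU: "emeasure D UNIV = ennreal (measure lborel C / M)"
    unfolding D_def using M0 by (intro emeasure_density_indicator_divide) auto
  have "emeasure (uniform_measure lborel A) UNIV = 1"
    using pos fin by (simp add: ennreal_divide_self)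
  then have "1 = ennreal (measure lborel C / M) + emeasure R UNIV"
    using split[of UNIV] DU by simp
  then have "emeasure R UNIV = 1 - ennreal (measure lborel C / M)"
    by (metis ennreal_add_diff_cancel_left ennreal_neq_top)
  also have "\<dots> = ennreal (1 - measure lborel C / M)"
    using M0 by (simp add: ennreal_minus[symmetric])
  finally have RU: "emeasure R UNIV = ennreal (1 - measure lborel C / M)" .
  show ?thesis
  proof (intro exI[of _ R] conjI ballI RU)
    show "sets R = sets borel" by (simp add: R_def)
    fix X :: "'a set" assume "X \<in> sets borel"
    then show "emeasure (uniform_measure lborel A) X
        = emeasure (density lborel (\<lambda>x. ennreal (indicator C x / M))) X + emeasure R X"
      using split by (simp add: D_def)
  qed
qed

lemma one_minus_overlap_ratio_le:
  assumes "A \<in> sets M" "B \<in> sets M" "emeasure M A \<noteq> \<infinity>" "emeasure M B \<noteq> \<infinity>" "0 < measure M A"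
  shows "1 - measure M (A \<inter> B) / max (measure M A) (measure M B)
    \<le> (measure M (A - B) + measure M (B - A)) / measure M A"
proof -
  have "A - A \<inter> B = A - B" "B - A \<inter> B = B - A" by auto
  then have A: "measure M A = measure M (A \<inter> B) + measure M (A - B)"
    and B: "measure M B = measure M (A \<inter> B) + measure M (B - A)"
    using measure_Diff[OF assms(3), of "A \<inter> B"] measure_Diff[OF assms(4), of "A \<inter> B"] assms(1,2)
    by auto
  let ?M = "max (measure M A) (measure M B)"
  have "1 - measure M (A \<inter> B) / ?M = (?M - measure M (A \<inter> B)) / ?M"
    using assms(5) by (simp add: field_simps)
  also have "\<dots> \<le> (measure M (A - B) + measure M (B - A)) / ?M"
    using assms(5) A B by (intro divide_right_mono) (auto simp: max_def)
  also have "\<dots> \<le> (measure M (A - B) + measure M (B - A)) / measure M A"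
    using assms(5) by (intro divide_left_mono) auto
  finally show ?thesis .
qed

lemma W2sq_uniform_measure_le:
  fixes A B :: "(real^2) set"
  assumes [measurable]: "A \<in> sets borel" "B \<in> sets borel"
    and A: "0 < emeasure lborel A" "emeasure lborel A < \<infinity>"
    and B: "0 < emeasure lborel B" "emeasure lborel B < \<infinity>"
    and R: "A \<subseteq> cball 0 R" "B \<subseteq> cball 0 R"
  shows "W2sq (uniform_measure lborel A) (uniform_measure lborel B)
    \<le> ennreal ((2 * R)\<^sup>2 * ((measure lborel (A - B) + measure lborel (B - A)) / measure lborel A))"
proof -
  define M where "M = max (measure lborel A) (measure lborel B)"
  define w where "w = 1 - measure lborel (A \<inter> B) / M"
  define D where "D = density lborel (\<lambda>x. ennreal (indicator (A \<inter> B) x / M))"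
  obtain R1 where R1: "sets R1 = sets borel" "emeasure R1 UNIV = ennreal w"
    "\<And>X. X \<in> sets borel \<Longrightarrow> emeasure (uniform_measure lborel A) X = emeasure D X + emeasure R1 X"
    using uniform_measure_common_part[of A "A \<inter> B" M] A by (auto simp: M_def w_def D_def)
  obtain R2 where R2: "sets R2 = sets borel" "emeasure R2 UNIV = ennreal w"
    "\<And>X. X \<in> sets borel \<Longrightarrow> emeasure (uniform_measure lborel B) X = emeasure D X + emeasure R2 X"
    using uniform_measure_common_part[of B "A \<inter> B" M] B
    by (auto simp: M_def w_def D_def Int_commute)
  have prob: "emeasure (uniform_measure lborel A) UNIV = 1"
    using A by (simp add: ennreal_divide_self)
  define \<gamma> where "\<gamma> = common_part_coupling D R1 R2 w"
  have sD: "sets D = sets borel" by (simp add: D_def)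
  have sU: "sets (uniform_measure lborel S) = sets borel" for S :: "(real^2) set" by simp
  note hyps = sU sU sD R1(1) R2(1) prob R1(2) R2(2) R1(3) R2(3)
  have \<gamma>: "\<gamma> \<in> couplings (uniform_measure lborel A) (uniform_measure lborel B)"
    unfolding \<gamma>_def by (rule common_part_coupling_in_couplings[OF hyps])
  have off: "emeasure \<gamma> {z. fst z \<noteq> snd z} \<le> ennreal w"
    unfolding \<gamma>_def by (rule emeasure_offdiagonal_common_part_coupling[OF hyps])
  have null: "emeasure (uniform_measure lborel S) (- cball 0 R) = 0"
    if "S \<subseteq> cball 0 R" "S \<in> sets borel" for S :: "(real^2) set"
  proof -
    have "S \<inter> - cball 0 R = {}" using that(1) by auto
    then show ?thesis using that(2) by simp
  qed
  have "W2sq (uniform_measure lborel A) (uniform_measure lborel B)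
      \<le> ennreal ((2 * R)\<^sup>2) * emeasure \<gamma> {z. fst z \<noteq> snd z}"
    using W2sq_le_offdiagonal[OF \<gamma> null null] R by simp
  also have "\<dots> \<le> ennreal ((2 * R)\<^sup>2) * ennreal w"
    using off by (rule mult_left_mono) simp
  also have "\<dots> \<le> ennreal ((2 * R)\<^sup>2 * ((measure lborel (A - B) + measure lborel (B - A)) / measure lborel A))"
  proof -
    have "w \<le> (measure lborel (A - B) + measure lborel (B - A)) / measure lborel A"
      unfolding w_def M_def using A B
      by (intro one_minus_overlap_ratio_le) (auto simp: emeasure_eq_ennreal_measure less_top)
    then have "(2 * R)\<^sup>2 * w
        \<le> (2 * R)\<^sup>2 * ((measure lborel (A - B) + measure lborel (B - A)) / measure lborel A)"
      by (intro mult_left_mono) auto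
    then show ?thesis by (metis ennreal_leI ennreal_mult' zero_le_power2)
  qed
  finally show ?thesis .
qed

lemma W_less_of_W2sq_less:
  assumes "0 < e" "W2sq \<mu> \<nu> < ennreal (e\<^sup>2)"
  shows "W \<mu> \<nu> < ennreal e"
proof -
  have fin: "W2sq \<mu> \<nu> \<noteq> \<infinity>" using assms(2) by (auto simp: top_unique)
  then have "enn2real (W2sq \<mu> \<nu>) < e\<^sup>2" using assms(2) by (simp add: less_top enn2real_less_iff)
  then have "sqrt (enn2real (W2sq \<mu> \<nu>)) < e"
    using assms(1) real_sqrt_less_mono[of _ "e\<^sup>2"] by fastforce
  then show ?thesis using fin by (simp add: W_def ennreal_less_iff)
qed

lemma UN_ball_subset_cball:
  fixes K :: "'a::real_normed_vector set"
  assumes "K \<subseteq> cball 0 B" "d \<le> 1"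
  shows "(\<Union>y\<in>K. ball y d) \<subseteq> cball 0 (B + 1)"
proof
  fix x assume "x \<in> (\<Union>y\<in>K. ball y d)"
  then obtain y where "y \<in> K" "dist y x < d" by auto
  then have "norm y \<le> B" "norm (x - y) < 1" using assms by (auto simp: dist_norm norm_minus_commute)
  then show "x \<in> cball 0 (B + 1)" using norm_triangle_ineq2[of x y] by auto
qed

lemma INT_thickening_eq:
  fixes K :: "'a::metric_space set"
  assumes "closed K"
  shows "(\<Inter>n. \<Union>y\<in>K. ball y (inverse (real (Suc n)))) = K"
proof
  show "K \<subseteq> (\<Inter>n. \<Union>y\<in>K. ball y (inverse (real (Suc n))))" by auto
  show "(\<Inter>n. \<Union>y\<in>K. ball y (inverse (real (Suc n)))) \<subseteq> K"
  proof
    fix x assume x: "x \<in> (\<Inter>n. \<Union>y\<in>K. ball y (inverse (real (Suc n))))"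
    have "\<exists>y\<in>K. dist y x < \<epsilon>" if eps: "\<epsilon> > 0" for \<epsilon>
    proof -
      obtain n where n: "inverse (real (Suc n)) < \<epsilon>" using reals_Archimedean[OF eps] by auto
      obtain y where "y \<in> K" "dist y x < inverse (real (Suc n))" using x by auto
      then show ?thesis using n by force
    qed
    then show "x \<in> K" using closed_approachable[OF assms] by blast
  qed
qed

lemma emeasure_thickening_small:
  fixes K :: "'a::euclidean_space set"
  assumes K: "compact K" "emeasure lborel K = 0" and "0 < \<eta>"
  shows "\<exists>d. 0 < d \<and> d \<le> 1 \<and> emeasure lborel (\<Union>y\<in>K. ball y d) < ennreal \<eta>"
proof -
  define T where "T n = (\<Union>y\<in>K. ball y (inverse (real (Suc n))))" for n
  have T_meas: "T n \<in> sets lborel" for n unfolding T_def by (simp add: open_UN)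
  obtain B where B: "K \<subseteq> cball 0 B"
    using compact_imp_bounded[OF K(1)] by (meson bounded_pos mem_cball_0 subsetI)
  have TB: "T n \<subseteq> cball 0 (B + 1)" for n
    unfolding T_def using B by (rule UN_ball_subset_cball) (simp add: inverse_le_1_iff)
  have T_fin: "emeasure lborel (T n) \<noteq> \<infinity>" for n
    using emeasure_bounded_finite[OF bounded_subset[OF bounded_cball TB], of n] by (simp add: less_top)
  have "decseq T"
  proof (rule decseq_SucI)
    fix n
    have "inverse (real (Suc (Suc n))) \<le> inverse (real (Suc n))" by (simp add: le_imp_inverse_le)
    then show "T (Suc n) \<subseteq> T n" unfolding T_def by (intro UN_mono subset_ball) auto
  qed
  have "(\<Inter>n. T n) = K"
    unfolding T_def by (rule INT_thickening_eq[OF compact_imp_closed[OF K(1)]])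
  then have "(INF n. emeasure lborel (T n)) = 0"
    using INF_emeasure_decseq[of T lborel] T_meas \<open>decseq T\<close> T_fin K(2) by auto
  then obtain n where "emeasure lborel (T n) < ennreal \<eta>"
    using \<open>0 < \<eta>\<close> by (metis INF_less_iff ennreal_less_zero_iff)
  then show ?thesis
    by (intro exI[of _ "inverse (real (Suc n))"]) (auto simp: T_def inverse_le_1_iff)
qed

lemma emeasure_image_S1_Cinf: "c \<in> Cinf \<Longrightarrow> emeasure lborel (c ` S1) = 0"
proof -
  assume c: "c \<in> Cinf"
  have "(c \<circ> ecirc) differentiable_on {0..1}"
    using Cinf_differentiable[OF c] by (simp add: differentiable_at_imp_differentiable_on)
  then have "negligible (c ` S1)"
    unfolding image_S1_eq_Icc by (intro negligible_differentiable_image_lowdim) simp_all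
  moreover have "c ` S1 \<in> sets lborel"
    using compact_image_S1[OF c] by (simp add: compact_imp_closed borel_closed)
  ultimately show ?thesis
    by (simp add: negligible_iff_null_sets null_sets_completion_iff null_sets_def)
qed

lemma Omega_symdiff_subset_thickening:
  assumes "c0 \<in> Emb" "c \<in> Emb" and close: "\<And>t. norm ((c \<circ> ecirc) t - (c0 \<circ> ecirc) t) < d"
  shows "(Omega c0 - Omega c) \<union> (Omega c - Omega c0) \<subseteq> (\<Union>y\<in>c0 ` S1. ball y d)"
proof -
  have "x \<in> Omega c \<longleftrightarrow> x \<in> Omega c0" if "x \<notin> (\<Union>y\<in>c0 ` S1. ball y d)" for x
    by (rule Omega_stable[OF assms]) (use that in \<open>force simp: dist_commute not_le\<close>)
  then show ?thesis by blast
qed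

lemma measure_symdiff_le:
  assumes "A \<in> fmeasurable M" "B \<in> fmeasurable M" "T \<in> fmeasurable M" "(A - B) \<union> (B - A) \<subseteq> T"
  shows "measure M (A - B) + measure M (B - A) \<le> measure M T"
proof -
  have "measure M (A - B) + measure M (B - A) = measure M ((A - B) \<union> (B - A))"
    using assms(1,2) by (intro measure_Union[symmetric]) (auto simp: fmeasurableD2 fmeasurable.Diff)
  also have "\<dots> \<le> measure M T"
    using assms by (intro measure_mono_fmeasurable) (auto simp: fmeasurable.Diff fmeasurableD)
  finally show ?thesis .
qed

lemma mult_div_less_of_less_div:
  fixes q a s e :: real
  assumes "0 \<le> q" "0 < a" "0 < e" "s < e * a / (q + 1)"
  shows "q * (s / a) < e"
proof -
  have "s / a < e / (q + 1)" using assms(1,2,4) by (simp add: field_simps)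
  then have "q * (s / a) \<le> q * (e / (q + 1))" using assms(1) by (intro mult_left_mono) auto
  also have "\<dots> < e" using assms(1,3) by (simp add: field_simps)
  finally show ?thesis .
qed

text \<open>\<open>d\<close> is chosen so that the \<open>d\<close>-neighbourhood of \<open>c\<^sub>0(S\<^sup>1)\<close>, which contains the symmetric
  difference of the two regions, has measure below \<open>e\<^sup>2 |\<Omega>(c\<^sub>0)| / ((2R)\<^sup>2 + 1)\<close>.\<close>

lemma W_F_small_if_C0_close:
  assumes c0: "c0 \<in> Emb" and e: "0 < e"
  shows "\<exists>d>0. \<forall>c\<in>Emb. (\<forall>t. norm ((c \<circ> ecirc) t - (c0 \<circ> ecirc) t) < d)
            \<longrightarrow> W (F c0) (F c) < ennreal e"
proof -
  define A where "A = Omega c0"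
  note OA = Omega_Emb[OF c0, folded A_def]
  have c0': "c0 \<in> Cinf" using c0 by (simp add: Emb_def)
  obtain R0 where R0: "A \<union> c0 ` S1 \<subseteq> cball 0 R0"
    using OA(3) compact_imp_bounded[OF compact_image_S1[OF c0']]
    by (meson bounded_Un bounded_pos mem_cball_0 subsetI)
  define R where "R = R0 + 1"
  have A: "0 < emeasure lborel A" "emeasure lborel A < \<infinity>"
    using emeasure_lborel_open_pos[OF OA(1,2)] emeasure_bounded_finite[OF OA(3)] .
  then have a: "0 < measure lborel A" by (simp add: emeasure_eq_ennreal_measure less_top)
  define \<eta> where "\<eta> = e\<^sup>2 * measure lborel A / ((2 * R)\<^sup>2 + 1)"
  have "0 < \<eta>" using e a by (simp add: \<eta>_def add_nonneg_pos)
  then obtain d where d: "0 < d" "d \<le> 1" and T: "emeasure lborel (\<Union>y\<in>c0 ` S1. ball y d) < ennreal \<eta>"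
    using emeasure_thickening_small[OF compact_image_S1[OF c0'] emeasure_image_S1_Cinf[OF c0']] by blast
  define T where "T = (\<Union>y\<in>c0 ` S1. ball y d)"
  have T_fm: "T \<in> fmeasurable lborel"
    using order.strict_trans[OF T ennreal_less_top] by (auto intro!: fmeasurableI simp: T_def open_UN)
  have mT: "measure lborel T < \<eta>"
    using T[folded T_def] fmeasurableD2[OF T_fm] \<open>0 < \<eta>\<close>
    by (simp add: emeasure_eq_ennreal_measure ennreal_less_iff)
  have AR: "A \<subseteq> cball 0 R" using R0 by (auto simp: R_def)
  have TR: "T \<subseteq> cball 0 R"
    unfolding T_def R_def using R0 d(2) by (intro UN_ball_subset_cball) auto
  show ?thesis
  proof (intro exI[of _ d] conjI ballI impI d(1))
    fix c assume c: "c \<in> Emb" and close: "\<forall>t. norm ((c \<circ> ecirc) t - (c0 \<circ> ecirc) t) < d"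
    define B where "B = Omega c"
    note OB = Omega_Emb[OF c, folded B_def]
    have B: "0 < emeasure lborel B" "emeasure lborel B < \<infinity>"
      using emeasure_lborel_open_pos[OF OB(1,2)] emeasure_bounded_finite[OF OB(3)] .
    have sd: "(A - B) \<union> (B - A) \<subseteq> T"
      unfolding A_def B_def T_def using Omega_symdiff_subset_thickening[OF c0 c] close by blast
    then have BR: "B \<subseteq> cball 0 R" using AR TR by blast
    have "A \<in> fmeasurable lborel" "B \<in> fmeasurable lborel"
      using A B OA(1) OB(1) by (auto intro: fmeasurableI)
    then have "measure lborel (A - B) + measure lborel (B - A) < \<eta>"
      using measure_symdiff_le[OF _ _ T_fm sd] mT by linarith
    then have "(2 * R)\<^sup>2 * ((measure lborel (A - B) + measure lborel (B - A)) / measure lborel A) < e\<^sup>2"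
      using a e by (intro mult_div_less_of_less_div) (simp_all add: \<eta>_def)
    then have "W2sq (F c0) (F c) < ennreal (e\<^sup>2)"
      using W2sq_uniform_measure_le[OF _ _ A B AR BR] OA(1) OB(1) e
      by (simp add: F_def A_def B_def ennreal_lessI order.strict_trans1)
    then show "W (F c0) (F c) < ennreal e" by (rule W_less_of_W2sq_less[OF e])
  qed
qed

section \<open>The quotient topology\<close>

lemma id_Diff: "id \<in> Diff"
proof -
  have "inv_into S1 id \<circ> ecirc = ecirc"
    by (rule ext) (simp add: inv_into_f_f)
  then show ?thesis unfolding Diff_def using smooth_ecirc by simp
qed

lemma image_S1_cls: "d \<in> cls c \<Longrightarrow> d ` S1 = c ` S1"
proof -
  assume "d \<in> cls c"
  then obtain \<phi> where \<phi>: "\<phi> \<in> Diff" "d = restrict (c \<circ> \<phi>) S1" by (auto simp: cls_def)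
  then have "\<phi> ` S1 = S1" by (simp add: Diff_def bij_betw_def)
  then show ?thesis using \<phi>(2) by (force simp: image_comp)
qed

lemma FB_cls: "FB (cls c) = F c"
proof -
  have "restrict (c \<circ> id) S1 \<in> cls c" using id_Diff unfolding cls_def by blast
  then have "(SOME d. d \<in> cls c) ` S1 = c ` S1" by (metis someI image_S1_cls)
  then show ?thesis by (simp add: FB_def F_def Omega_def)
qed

lemma openin_B_top: "openin B_top U \<longleftrightarrow> U \<subseteq> Bset \<and> openin Emb_top {c \<in> Emb. cls c \<in> U}"
  unfolding B_top_def using istopology_B by simp

lemma openin_SP_top:
  "openin SP_top U \<longleftrightarrow> U \<subseteq> SP \<and> (\<forall>\<mu>\<in>U. \<exists>\<epsilon>>0. {\<nu> \<in> SP. W \<mu> \<nu> < ennreal \<epsilon>} \<subseteq> U)"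
  unfolding SP_top_def using istopology_SP by simp

lemma topspace_SP_top: "topspace SP_top = SP"
proof -
  have "openin SP_top SP" by (auto simp: openin_SP_top intro: exI[of _ 1])
  then show ?thesis using openin_SP_top by (auto simp: topspace_def)
qed

definition C0_ball :: "(real^2 \<Rightarrow> real^2) \<Rightarrow> real \<Rightarrow> (real^2 \<Rightarrow> real^2) set" where
  "C0_ball c0 r = {c \<in> Cinf. (SUP t. norm (Dk 0 (c \<circ> ecirc) t - Dk 0 (c0 \<circ> ecirc) t)) < r}"

lemma openin_C0_ball: "c0 \<in> Cinf \<Longrightarrow> 0 < r \<Longrightarrow> openin Cinf_top (C0_ball c0 r)"
  unfolding Cinf_top_def C0_ball_def by (rule topology_generated_by_Basis) blast

lemma centre_in_C0_ball: "c0 \<in> Cinf \<Longrightarrow> 0 < r \<Longrightarrow> c0 \<in> C0_ball c0 r"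
  by (simp add: C0_ball_def)

lemma C0_ball_close:
  assumes "c \<in> C0_ball c0 r" "c0 \<in> Cinf"
  shows "norm ((c \<circ> ecirc) t - (c0 \<circ> ecirc) t) < r"
proof -
  define f where "f t = norm ((c \<circ> ecirc) t - (c0 \<circ> ecirc) t)" for t
  have c: "c \<in> Cinf" and sup: "(SUP t. f t) < r" using assms(1) by (auto simp: C0_ball_def f_def)
  have "continuous_on {0..1} f"
    unfolding f_def[abs_def] using c assms(2) by (intro continuous_intros Cinf_continuous_on)
  then have "bounded (f ` {0..1})" by (simp add: compact_imp_bounded compact_continuous_image)
  moreover have "range f = f ` {0..1}" using range_periodic[of f 0] by (simp add: f_def)
  ultimately have "bdd_above (range f)" by (simp add: bounded_imp_bdd_above)
  then show ?thesis using cSUP_upper[OF UNIV_I, of f t] sup by (simp add: f_def)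
qed

lemma topspace_Emb_top: "topspace Emb_top = Emb"
proof -
  have "Cinf \<subseteq> topspace Cinf_top"
    using openin_C0_ball[of _ 1] centre_in_C0_ball[of _ 1] openin_subset by fastforce
  then show ?thesis by (auto simp: Emb_top_def Emb_def)
qed

lemma topspace_B_top: "topspace B_top = Bset"
proof -
  have "{c \<in> Emb. cls c \<in> Bset} = Emb" by (auto simp: Bset_def)
  then have "openin B_top Bset"
    using openin_topspace[of Emb_top] by (simp add: openin_B_top topspace_Emb_top)
  then show ?thesis using openin_B_top by (auto simp: topspace_def)
qed

lemma openin_Emb_top_F_preimage:
  assumes U: "openin SP_top U"
  shows "openin Emb_top {c \<in> Emb. F c \<in> U}"
proof (subst openin_subopen, intro ballI)
  fix c0 assume "c0 \<in> {c \<in> Emb. F c \<in> U}"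
  then have c0: "c0 \<in> Emb" "c0 \<in> Cinf" and "F c0 \<in> U" by (auto simp: Emb_def)
  then obtain e where e: "0 < e" "{\<nu> \<in> SP. W (F c0) \<nu> < ennreal e} \<subseteq> U"
    using U by (auto simp: openin_SP_top)
  obtain d where d: "0 < d" "\<And>c. c \<in> Emb \<Longrightarrow> (\<forall>t. norm ((c \<circ> ecirc) t - (c0 \<circ> ecirc) t) < d)
      \<Longrightarrow> W (F c0) (F c) < ennreal e"
    using W_F_small_if_C0_close[OF c0(1) e(1)] by blast
  have "openin Emb_top (C0_ball c0 d \<inter> Emb)"
    using openin_C0_ball[OF c0(2) d(1)] by (auto simp: Emb_top_def openin_subtopology)
  moreover have "C0_ball c0 d \<inter> Emb \<subseteq> {c \<in> Emb. F c \<in> U}"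
    using d C0_ball_close[OF _ c0(2)] e(2) F_in_SP by blast
  ultimately show "\<exists>T. openin Emb_top T \<and> c0 \<in> T \<and> T \<subseteq> {c \<in> Emb. F c \<in> U}"
    using centre_in_C0_ball[OF c0(2) d(1)] c0(1) by blast
qed

theorem mainTheorem10:
  shows "continuous_map B_top SP_top FB"
  unfolding continuous_map_def
proof (intro conjI allI impI)
  show "FB \<in> topspace B_top \<rightarrow> topspace SP_top"
    by (auto simp: topspace_B_top topspace_SP_top Bset_def FB_cls F_in_SP)
  fix U assume "openin SP_top U"
  moreover have "{c \<in> Emb. cls c \<in> {X \<in> topspace B_top. FB X \<in> U}} = {c \<in> Emb. F c \<in> U}"
    by (auto simp: topspace_B_top Bset_def FB_cls)
  ultimately show "openin B_top {X \<in> topspace B_top. FB X \<in> U}"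
    by (simp add: openin_B_top topspace_B_top openin_Emb_top_F_preimage)
qed

end
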